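(* Let $(\mathbf x,\mathbf p,\mu)$ be a deterministic TFM that is 2-user-friendly and satisfies weak UIC and $2$-weak-SCP. Then there exist a bid vector $\mathbf b=(b_1,\dots,b_m)$ and two distinct users $i,j$ with $x_i(\mathbf b)=x_j(\mathbf b)=1$, $b_i>p_i(\mathbf b)$ and $b_j>p_j(\mathbf b)$.
   Context: Setting (TFM). Each user $i$ has a true value $v_i\ge0$ and submits a single bid $b_i\ge0$; $\mathbf b=(b_1,\dots,b_m)$. A TFM has an inclusion rule (run by the miner, choosing at most $B$ bids) and confirmation, payment, miner-revenue rules (run by the blockchain on included bids); the mechanism treats users symmetrically. Composing the honest inclusion rule with the others gives deterministic $(\mathbf x,\mathbf p,\mu)$: $x_i(\mathbf b)\in\{0,1\}$ indicates confirmation, $p_i(\mathbf b)\le b_i$ the payment ($0$ if unconfirmed), $\mu(\mathbf b)$ the miner revenue. The TFM is 2-user-friendly if there exist $\mathbf b$ and $i\ne j$ with $x_i(\mathbf b)=x_j(\mathbf b)=1$. Strategic players (a user, the miner, or the miner with some users) may bid untruthfully after seeing all bids, inject fake bids (true value $0$), and (if the miner is involved) include any at most $B$ available bids. Weak ($1$-strict) utility: miner revenue (if the miner is in the player) plus $v-p$ for each confirmed transaction of the player (true value $v$, payment $p$), minus $(b-v)$ for each unconfirmed transaction of the player with bid $b>v$. Weak UIC: with an honest miner, each user's weak utility is maximized by truthful bidding without fake bids, whatever the other bids. $c$-weak-SCP: for every coalition of the miner with between $1$ and $c$ users, joint weak utility is maximized by truthful bidding and honest miner behavior, whatever the other bids.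 *)

theory Defs
  imports Complex_Main "HOL-Combinatorics.Permutations"
begin

text \<open>A bid vector is a list of reals; user identities are list positions.
  A TFM consists of an inclusion rule Inc (run by the miner; returns a set of
  positions of the bid vector), and confirmation / payment / miner-revenue rules
  Conf, Pay, Rev run by the blockchain on the list of included bids
  (Conf returns positions in the included list, Pay gives the payment of a position
  in the included list, Rev the miner revenue).\<close>

definition nonneg :: "real list \<Rightarrow> bool" where
  "nonneg b \<longleftrightarrow> (\<forall>x\<in>set b. x \<ge> 0)"

definition valid_incl :: "nat \<Rightarrow> real list \<Rightarrow> nat set \<Rightarrow> bool" where
  "valid_incl B b S \<longleftrightarrow> S \<subseteq> {..<length b} \<and> card S \<le> B"

definition included_bids :: "real list \<Rightarrow> nat set \<Rightarrow> real list" where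
  "included_bids b S = map (\<lambda>i. b ! i) (sorted_list_of_set S)"

definition pos :: "nat set \<Rightarrow> nat \<Rightarrow> nat" where
  "pos S i = card {j\<in>S. j < i}"

definition confirmed ::
  "(real list \<Rightarrow> nat set) \<Rightarrow> real list \<Rightarrow> nat set \<Rightarrow> nat \<Rightarrow> bool" where
  "confirmed Conf b S i \<longleftrightarrow> i \<in> S \<and> pos S i \<in> Conf (included_bids b S)"

definition payment ::
  "(real list \<Rightarrow> nat set) \<Rightarrow> (real list \<Rightarrow> nat \<Rightarrow> real) \<Rightarrow> real list \<Rightarrow> nat set \<Rightarrow> nat \<Rightarrow> real" where
  "payment Conf Pay b S i =
     (if confirmed Conf b S i then Pay (included_bids b S) (pos S i) else 0)"

definition revenue :: "(real list \<Rightarrow> real) \<Rightarrow> real list \<Rightarrow> nat set \<Rightarrow> real" where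
  "revenue Rev b S = Rev (included_bids b S)"

definition xh where "xh Inc Conf b i = confirmed Conf b (Inc b) i"
definition ph where "ph Inc Conf Pay b i = payment Conf Pay b (Inc b) i"
definition muh where "muh Inc Rev b = revenue Rev b (Inc b)"

text \<open>Well-formedness of a TFM with block size B: the honest inclusion rule chooses
  at most B bids; the honest payment never exceeds the bid; the blockchain rules treat
  users symmetrically (permuting the included bids permutes the outcome).\<close>
definition is_TFM ::
  "nat \<Rightarrow> (real list \<Rightarrow> nat set) \<Rightarrow> (real list \<Rightarrow> nat set) \<Rightarrow> (real list \<Rightarrow> nat \<Rightarrow> real)
     \<Rightarrow> (real list \<Rightarrow> real) \<Rightarrow> bool" where
  "is_TFM B Inc Conf Pay Rev \<longleftrightarrow>
     (\<forall>b. nonneg b \<longrightarrow> valid_incl B b (Inc b)) \<and>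
     (\<forall>b i. nonneg b \<longrightarrow> i < length b \<longrightarrow> ph Inc Conf Pay b i \<le> b ! i) \<and>
     (\<forall>c \<pi>. nonneg c \<longrightarrow> \<pi> permutes {..<length c} \<longrightarrow>
        (let c' = map (\<lambda>k. c ! \<pi> k) [0..<length c] in
          Rev c' = Rev c \<and>
          (\<forall>k<length c. (k \<in> Conf c' \<longleftrightarrow> \<pi> k \<in> Conf c) \<and>
                         (k \<in> Conf c' \<longrightarrow> Pay c' k = Pay c (\<pi> k)))))"

definition two_user_friendly where
  "two_user_friendly Inc Conf \<longleftrightarrow>
     (\<exists>b i j. nonneg b \<and> i < length b \<and> j < length b \<and> i \<noteq> j \<and>
              xh Inc Conf b i \<and> xh Inc Conf b j)"

text \<open>A deviation of coalition K (set of positions of the true bid vector b, whose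
  entries are the true values) to bid vector b': the original users are embedded
  order-preservingly by sigma, non-coalition users keep their bids, coalition users may
  change their bids, and all positions of b' outside the image of sigma are fake bids
  (true value 0) injected by the strategic player.\<close>
definition deviation :: "real list \<Rightarrow> nat set \<Rightarrow> real list \<Rightarrow> (nat \<Rightarrow> nat) \<Rightarrow> bool" where
  "deviation b K b' \<sigma> \<longleftrightarrow> nonneg b' \<and> strict_mono_on {..<length b} \<sigma> \<and>
     \<sigma> ` {..<length b} \<subseteq> {..<length b'} \<and>
     (\<forall>i<length b. i \<notin> K \<longrightarrow> b' ! (\<sigma> i) = b ! i)"

definition tx_util :: "real \<Rightarrow> real \<Rightarrow> bool \<Rightarrow> real \<Rightarrow> real" where
  "tx_util v bid conf p = (if conf then v - p else if bid > v then - (bid - v) else 0)"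

definition users_util ::
  "(real list \<Rightarrow> nat set) \<Rightarrow> (real list \<Rightarrow> nat \<Rightarrow> real) \<Rightarrow> real list \<Rightarrow> nat set
     \<Rightarrow> real list \<Rightarrow> (nat \<Rightarrow> nat) \<Rightarrow> nat set \<Rightarrow> real" where
  "users_util Conf Pay b K b' \<sigma> S =
     (\<Sum>i\<in>K. tx_util (b ! i) (b' ! \<sigma> i) (confirmed Conf b' S (\<sigma> i)) (payment Conf Pay b' S (\<sigma> i)))
   + (\<Sum>j\<in>{..<length b'} - \<sigma> ` {..<length b}.
        tx_util 0 (b' ! j) (confirmed Conf b' S j) (payment Conf Pay b' S j))"

definition weak_UIC where
  "weak_UIC Inc Conf Pay \<longleftrightarrow>
     (\<forall>b i b' \<sigma>. nonneg b \<longrightarrow> i < length b \<longrightarrow> deviation b {i} b' \<sigma> \<longrightarrow>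
        users_util Conf Pay b {i} b' \<sigma> (Inc b') \<le> users_util Conf Pay b {i} b id (Inc b))"

definition weak_SCP where
  "weak_SCP c B Inc Conf Pay Rev \<longleftrightarrow>
     (\<forall>b K b' \<sigma> S. nonneg b \<longrightarrow> K \<subseteq> {..<length b} \<longrightarrow> 1 \<le> card K \<longrightarrow> card K \<le> c \<longrightarrow>
        deviation b K b' \<sigma> \<longrightarrow> valid_incl B b' S \<longrightarrow>
        revenue Rev b' S + users_util Conf Pay b K b' \<sigma> S
          \<le> revenue Rev b (Inc b) + users_util Conf Pay b K b id (Inc b))"

end

theory Submission
  imports Defs
begin

text \<open>Start from bids b in which users i and j are both confirmed and raise both bids by 1,
  giving b12 (with b2 the intermediate vector where only j is raised). Four deviations
  are compared: j alone moving from b2 to b (UIC); the miner with i and j moving from b12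
  to b and from b to b2; the miner with i moving from b2 to b12 (2-SCP). Adding the three
  SCP inequalities the miner revenues and the utilities of i cancel, and with the UIC
  inequality this leaves: the honest utility of j at b12 is at least b_j + 1 - p_j(b) \<ge> 1.
  So j is confirmed at b12 and pays strictly less than its bid; by symmetry so is i.\<close>

definition honest_util ::
  "(real list \<Rightarrow> nat set) \<Rightarrow> (real list \<Rightarrow> nat set) \<Rightarrow> (real list \<Rightarrow> nat \<Rightarrow> real)
     \<Rightarrow> real list \<Rightarrow> real list \<Rightarrow> nat \<Rightarrow> real" where
  "honest_util Inc Conf Pay v w k = tx_util (v ! k) (w ! k) (xh Inc Conf w k) (ph Inc Conf Pay w k)"

lemma nonneg_list_update: "nonneg b \<Longrightarrow> x \<ge> 0 \<Longrightarrow> nonneg (b[k := x])"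
  unfolding nonneg_def using set_update_subset_insert by fastforce

lemma honest_util_confirmed:
  "xh Inc Conf w k \<Longrightarrow> honest_util Inc Conf Pay v w k = v ! k - ph Inc Conf Pay w k"
  unfolding honest_util_def tx_util_def by simp

lemma honest_util_overbid:
  assumes "w ! k = v ! k + d" and "d > 0"
  shows "honest_util Inc Conf Pay v w k = honest_util Inc Conf Pay w w k - d"
  using assms unfolding honest_util_def tx_util_def by simp

lemma honest_util_pos_imp_strict:
  assumes "honest_util Inc Conf Pay w w k > 0"
  shows "xh Inc Conf w k \<and> ph Inc Conf Pay w k < w ! k"
  using assms unfolding honest_util_def tx_util_def by (auto split: if_splits)

lemma deviation_same_length:
  assumes "nonneg w" and "length w = length v" and "\<forall>k<length v. k \<notin> K \<longrightarrow> w ! k = v ! k"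
  shows "deviation v K w id"
  using assms unfolding deviation_def by (auto simp: strict_mono_on_def)

lemma users_util_same_length:
  "length w = length v \<Longrightarrow>
     users_util Conf Pay v K w id (Inc w) = (\<Sum>k\<in>K. honest_util Inc Conf Pay v w k)"
  unfolding users_util_def honest_util_def xh_def ph_def by simp

lemma weak_UIC_same_length:
  assumes "weak_UIC Inc Conf Pay" and "nonneg v" and "nonneg w" and "length w = length v"
    and "i < length v" and "\<forall>k<length v. k \<noteq> i \<longrightarrow> w ! k = v ! k"
  shows "honest_util Inc Conf Pay v w i \<le> honest_util Inc Conf Pay v v i"
proof -
  have "deviation v {i} w id" using assms(3,4,6) by (intro deviation_same_length) auto
  then have "users_util Conf Pay v {i} w id (Inc w) \<le> users_util Conf Pay v {i} v id (Inc v)"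
    using assms(1,2,5) unfolding weak_UIC_def by blast
  then show ?thesis using assms(4) by (simp add: users_util_same_length)
qed

lemma weak_SCP_same_length:
  assumes tfm: "is_TFM B Inc Conf Pay Rev" and scp: "weak_SCP c B Inc Conf Pay Rev"
    and "nonneg v" and "nonneg w" and "length w = length v"
    and "K \<subseteq> {..<length v}" and "1 \<le> card K" and "card K \<le> c"
    and "\<forall>k<length v. k \<notin> K \<longrightarrow> w ! k = v ! k"
  shows "muh Inc Rev w + (\<Sum>k\<in>K. honest_util Inc Conf Pay v w k)
           \<le> muh Inc Rev v + (\<Sum>k\<in>K. honest_util Inc Conf Pay v v k)"
proof -
  have "deviation v K w id" using assms(4,5,9) by (rule deviation_same_length)
  moreover have "valid_incl B w (Inc w)" using tfm \<open>nonneg w\<close> unfolding is_TFM_def by blast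
  ultimately have "revenue Rev w (Inc w) + users_util Conf Pay v K w id (Inc w)
      \<le> revenue Rev v (Inc v) + users_util Conf Pay v K v id (Inc v)"
    using scp assms(3,6-8) unfolding weak_SCP_def by blast
  then show ?thesis using assms(5) by (simp add: users_util_same_length muh_def)
qed

lemma raising_two_confirmed_bids_gives_strict_utility:
  assumes tfm: "is_TFM B Inc Conf Pay Rev" and uic: "weak_UIC Inc Conf Pay"
    and scp: "weak_SCP 2 B Inc Conf Pay Rev"
    and nb: "nonneg b" and i: "i < length b" and j: "j < length b" and ij: "i \<noteq> j"
    and xi: "xh Inc Conf b i" and xj: "xh Inc Conf b j"
  defines "b12 \<equiv> b[i := b ! i + 1, j := b ! j + 1]"
  shows "xh Inc Conf b12 j \<and> ph Inc Conf Pay b12 j < b12 ! j"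
proof -
  define b2 where "b2 = b[j := b ! j + 1]"
  define u where "u = honest_util Inc Conf Pay"
  have "b ! i \<ge> 0" "b ! j \<ge> 0" using nb i j unfolding nonneg_def by auto
  then have n2: "nonneg b2" and n12: "nonneg b12"
    unfolding b2_def b12_def using nb by (simp_all add: nonneg_list_update)
  have l2: "length b2 = length b" and l12: "length b12 = length b"
    unfolding b2_def b12_def by simp_all
  have b2i: "b2 ! i = b ! i" and b2j: "b2 ! j = b ! j + 1"
    and b12i: "b12 ! i = b ! i + 1" and b12j: "b12 ! j = b ! j + 1"
    unfolding b2_def b12_def using i j ij by simp_all
  have pj: "ph Inc Conf Pay b j \<le> b ! j" using tfm nb j unfolding is_TFM_def by blast
  have pair: "{i, j} \<subseteq> {..<length b}" "1 \<le> card {i, j}" "card {i, j} \<le> (2::nat)"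
    using i j ij by auto
  have b_b12: "\<forall>k<length b12. k \<notin> {i, j} \<longrightarrow> b ! k = b12 ! k"
    and b2_b: "\<forall>k<length b. k \<notin> {i, j} \<longrightarrow> b2 ! k = b ! k"
    and b_b2: "\<forall>k<length b2. k \<noteq> j \<longrightarrow> b ! k = b2 ! k"
    unfolding b2_def b12_def by auto
  have b12_b2: "\<forall>k<length b2. k \<notin> {i} \<longrightarrow> b12 ! k = b2 ! k"
    unfolding b2_def b12_def by (metis insertI1 list_update_overwrite list_update_swap nth_list_update_neq)
  have A: "u b2 b j \<le> u b2 b2 j"
    using weak_UIC_same_length[OF uic n2 nb _ _ b_b2] j l2 by (simp add: u_def)
  have B: "muh Inc Rev b + u b12 b i + u b12 b j \<le> muh Inc Rev b12 + u b12 b12 i + u b12 b12 j"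
    using weak_SCP_same_length[OF tfm scp n12 nb _ _ _ _ b_b12] pair ij l12 by (simp add: u_def)
  have C: "muh Inc Rev b2 + u b b2 i + u b b2 j \<le> muh Inc Rev b + u b b i + u b b j"
    using weak_SCP_same_length[OF tfm scp nb n2 _ _ _ _ b2_b] pair ij l2 by (simp add: u_def)
  have D: "muh Inc Rev b12 + u b2 b12 i \<le> muh Inc Rev b2 + u b2 b2 i"
    using weak_SCP_same_length[OF tfm scp n2 n12 _ _ _ _ b12_b2] i l2 l12 by (simp add: u_def)
  have same_value: "u b b2 i = u b2 b2 i" "u b b i = u b2 b i" "u b12 b i = u b b i + 1"
    "u b2 b j = u b b j + 1" "u b12 b j = u b b j + 1"
    using xi xj b2i b2j b12i b12j unfolding u_def honest_util_def tx_util_def by simp_all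
  have overbid: "u b b2 j = u b2 b2 j - 1" "u b2 b12 i = u b12 b12 i - 1"
    unfolding u_def by (rule honest_util_overbid; simp add: b2i b2j b12i)+
  have "u b b j = b ! j - ph Inc Conf Pay b j"
    unfolding u_def using xj by (rule honest_util_confirmed)
  then have "u b12 b12 j \<ge> 1"
    using A B C D pj unfolding same_value overbid by linarith
  then show ?thesis unfolding u_def by (intro honest_util_pos_imp_strict) simp
qed

theorem mainTheorem20:
  fixes B :: nat
    and Inc :: "real list \<Rightarrow> nat set"
    and Conf :: "real list \<Rightarrow> nat set"
    and Pay :: "real list \<Rightarrow> nat \<Rightarrow> real"
    and Rev :: "real list \<Rightarrow> real"
  assumes "is_TFM B Inc Conf Pay Rev"
    and "two_user_friendly Inc Conf"
    and "weak_UIC Inc Conf Pay"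
    and "weak_SCP 2 B Inc Conf Pay Rev"
  shows "\<exists>b i j. nonneg b \<and> i < length b \<and> j < length b \<and> i \<noteq> j \<and>
           xh Inc Conf b i \<and> xh Inc Conf b j \<and>
           b ! i > ph Inc Conf Pay b i \<and> b ! j > ph Inc Conf Pay b j"
proof -
  obtain b i j where nb: "nonneg b" and i: "i < length b" and j: "j < length b" and ij: "i \<noteq> j"
    and xi: "xh Inc Conf b i" and xj: "xh Inc Conf b j"
    using assms(2) unfolding two_user_friendly_def by blast
  define b12 where "b12 = b[i := b ! i + 1, j := b ! j + 1]"
  have swap: "b[j := b ! j + 1, i := b ! i + 1] = b12"
    unfolding b12_def using ij by (simp add: list_update_swap)
  have "xh Inc Conf b12 j \<and> ph Inc Conf Pay b12 j < b12 ! j"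
    unfolding b12_def
    by (rule raising_two_confirmed_bids_gives_strict_utility[OF assms(1,3,4) nb i j ij xi xj])
  moreover have "xh Inc Conf b12 i \<and> ph Inc Conf Pay b12 i < b12 ! i"
    using raising_two_confirmed_bids_gives_strict_utility[OF assms(1,3,4) nb j i _ xj xi] ij
    unfolding swap by blast
  moreover have "b ! i \<ge> 0" "b ! j \<ge> 0" using nb i j unfolding nonneg_def by auto
  then have "nonneg b12" unfolding b12_def using nb by (simp add: nonneg_list_update)
  moreover have "length b12 = length b" unfolding b12_def by simp
  ultimately show ?thesis using i j ij by (intro exI[of _ b12] exI[of _ i] exI[of _ j]) simp
qed

end
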